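(* Let $\{b_1,\dots,b_n\}$ and $\{a_1,\dots,a_n\}$ be two bases of an $n$-dimensional vector space $V$ and let $i\in\{1,\dots,n-1\}$. Then there exists a bijection $\phi$ from the set of $i$-element subsets of $\{1,\dots,n\}$ to the set of $(n-i)$-element subsets of $\{1,\dots,n\}$ such that for every $i$-element subset $I$, the set $\{b_k:k\in I\}\cup\{a_j:j\in\phi(I)\}$ is a basis of $V$. *)

theory Defs
  imports Complex_Main
begin

end

theory Submission
  imports Defs
begin

text \<open>
  Generalise to two families \<open>b\<close> on \<open>IB\<close> and \<open>a\<close> on \<open>IA\<close> that both extend a fixed
  independent set \<open>C\<close> to a basis of the same space, and induct on \<open>IB\<close>. For \<open>k \<in> IB\<close>
  the symmetric exchange property yields \<open>j \<in> IA\<close> such that \<open>b k\<close> and \<open>a j\<close> can each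
  replace the other. An \<open>i\<close>-set \<open>I\<close> containing \<open>k\<close> is handled by moving \<open>b k\<close> into \<open>C\<close>
  and recursing on \<open>I - {k}\<close>; an \<open>i\<close>-set avoiding \<open>k\<close> by moving \<open>a j\<close> into \<open>C\<close>,
  recursing on \<open>I\<close> and adding \<open>j\<close> to the complement found. By Pascal's rule for
  subsets the two partial maps glue to a bijection.
\<close>

lemma bij_betw_insert_subsets:
  assumes "finite X" "x \<notin> X"
  shows "bij_betw (insert x) {I. I \<subseteq> X \<and> P (Suc (card I))}
           {I. I \<subseteq> insert x X \<and> x \<in> I \<and> P (card I)}"
proof (rule bij_betw_byWitness[where f' = "\<lambda>I. I - {x}"])
  have "card (insert x I) = Suc (card I)" if "I \<subseteq> X" for I
    using assms that by (meson card_insert_disjoint finite_subset subsetD)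
  then show "insert x ` {I. I \<subseteq> X \<and> P (Suc (card I))}
      \<subseteq> {I. I \<subseteq> insert x X \<and> x \<in> I \<and> P (card I)}"
    by auto
  have "Suc (card (I - {x})) = card I" if "I \<subseteq> insert x X" "x \<in> I" for I
    using assms that by (metis card_Suc_Diff1 finite_insert finite_subset)
  then show "(\<lambda>I. I - {x}) ` {I. I \<subseteq> insert x X \<and> x \<in> I \<and> P (card I)}
      \<subseteq> {I. I \<subseteq> X \<and> P (Suc (card I))}"
    by auto
qed (use assms in auto)

lemma bij_betw_subsets_insert_split:
  assumes F: "finite F" "k \<notin> F" and G: "finite G" "j \<notin> G"
    and \<phi>1: "bij_betw \<phi>1 {I. I \<subseteq> F \<and> card I = r} {J. J \<subseteq> G \<and> card J + r = m}"
    and \<phi>2: "bij_betw \<phi>2 {I. I \<subseteq> F \<and> card I = Suc r} {J. J \<subseteq> G \<and> card J + Suc r = m}"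
  shows "bij_betw (\<lambda>I. if k \<in> I then \<phi>1 (I - {k}) else insert j (\<phi>2 I))
           {I. I \<subseteq> insert k F \<and> card I = Suc r} {J. J \<subseteq> insert j G \<and> card J + Suc r = Suc m}"
    (is "bij_betw ?\<phi> _ _")
proof -
  let ?D1 = "{I. I \<subseteq> insert k F \<and> k \<in> I \<and> card I = Suc r}"
  let ?E2 = "{J. J \<subseteq> insert j G \<and> j \<in> J \<and> card J + Suc r = Suc m}"
  have k_free: "I - {k} = I" if "I \<subseteq> F" for I
    using F that by blast
  have "bij_betw (?\<phi> \<circ> insert k) {I. I \<subseteq> F \<and> card I = r} {J. J \<subseteq> G \<and> card J + r = m}"
    using \<phi>1 by (rule bij_betw_cong[THEN iffD1, rotated]) (simp add: k_free)
  moreover have "bij_betw (insert k) {I. I \<subseteq> F \<and> card I = r} ?D1"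
    using bij_betw_insert_subsets[OF F, of "\<lambda>c. c = Suc r"] by simp
  ultimately have D1: "bij_betw ?\<phi> ?D1 {J. J \<subseteq> G \<and> card J + r = m}"
    using bij_betw_comp_iff by blast
  have "bij_betw (insert j \<circ> \<phi>2) {I. I \<subseteq> F \<and> card I = Suc r} ?E2"
    using \<phi>2 bij_betw_insert_subsets[OF G, of "\<lambda>c. c + Suc r = Suc m"] by (simp add: bij_betw_trans)
  then have D2: "bij_betw ?\<phi> {I. I \<subseteq> F \<and> card I = Suc r} ?E2"
    by (rule bij_betw_cong[THEN iffD1, rotated]) (use F in auto)
  have "bij_betw ?\<phi> (?D1 \<union> {I. I \<subseteq> F \<and> card I = Suc r}) ({J. J \<subseteq> G \<and> card J + r = m} \<union> ?E2)"
    by (rule bij_betw_combine[OF D1 D2]) (use G in blast)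
  moreover have "{I. I \<subseteq> insert k F \<and> card I = Suc r} = ?D1 \<union> {I. I \<subseteq> F \<and> card I = Suc r}"
    by blast
  moreover have "{J. J \<subseteq> insert j G \<and> card J + Suc r = Suc m} = {J. J \<subseteq> G \<and> card J + r = m} \<union> ?E2"
    by auto
  ultimately show ?thesis
    by simp
qed

text \<open>Defined outside the locale \<open>vector_space\<close>: a locale definition would be hidden behind
  the constant of the same name that the interpretation \<open>real_vector\<close> introduces.\<close>

definition basis_extension ::
    "('a::field \<Rightarrow> 'b::ab_group_add \<Rightarrow> 'b) \<Rightarrow> 'b set \<Rightarrow> ('i \<Rightarrow> 'b) \<Rightarrow> 'i set \<Rightarrow> 'b set \<Rightarrow> bool"
  where "basis_extension scale C f I U \<longleftrightarrow>
    inj_on f I \<and> C \<inter> f ` I = {} \<and> \<not> module.dependent scale (C \<union> f ` I)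
    \<and> module.span scale (C \<union> f ` I) = U"

context vector_space
begin

lemma span_insert_swap:
  assumes "x \<in> span (insert y X)" "x \<notin> span X"
  shows "span (insert x X) = span (insert y X)"
proof -
  have "y \<in> span (insert x X)"
    using assms by (rule in_span_insert)
  then have "span (insert x X) = span (insert y (insert x X))"
    by (simp add: span_redundant)
  also have "\<dots> = span (insert x (insert y X))"
    by (simp add: insert_commute)
  also have "\<dots> = span (insert y X)"
    using assms(1) by (rule span_redundant)
  finally show ?thesis .
qed

lemma independent_in_span_Diff:
  assumes Y: "independent Y" and "finite T" and v: "v \<in> span Y"
    and "\<forall>y\<in>T. v \<in> span (Y - {y})"
  shows "v \<in> span (Y - T)"
  using \<open>finite T\<close> \<open>\<forall>y\<in>T. _\<close>
proof (induction T rule: finite_induct)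
  case empty
  then show ?case using v by simp
next
  case (insert y T)
  then have IH: "v \<in> span (Y - T)" and vy: "v \<in> span (Y - {y})"
    by auto
  show ?case
  proof (cases "y \<in> Y")
    case False
    then show ?thesis using IH by (simp add: Diff_insert2[of Y y T])
  next
    case True
    show ?thesis
    proof (rule ccontr)
      assume nv: "v \<notin> span (Y - insert y T)"
      have "Y - T = insert y (Y - insert y T)"
        using True insert.hyps(2) by auto
      then have "y \<in> span (insert v (Y - insert y T))"
        using IH nv in_span_insert by metis
      also have "\<dots> \<subseteq> span (Y - {y})"
        using vy by (intro span_minimal) (auto intro: span_base)
      finally show False
        using Y True unfolding dependent_def by blast
    qed
  qed
qed

lemma basis_extension_not_in_span:
  assumes "basis_extension scale C f I U" "j \<in> I"
  shows "f j \<notin> span (C \<union> f ` (I - {j}))"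
proof
  assume "f j \<in> span (C \<union> f ` (I - {j}))"
  moreover have "C \<union> f ` (I - {j}) = (C \<union> f ` I) - {f j}"
    using assms unfolding basis_extension_def inj_on_def by blast
  ultimately have "dependent (C \<union> f ` I)"
    using assms(2) unfolding dependent_def by auto
  then show False
    using assms(1) unfolding basis_extension_def by simp
qed

lemma basis_extension_exchange:
  assumes B: "basis_extension scale C f I U" and j: "j \<in> I"
    and v: "v \<in> U" "v \<notin> span (C \<union> f ` (I - {j}))"
  shows "basis_extension scale (insert v C) f (I - {j}) U"
proof -
  have inj: "inj_on f I" and disj: "C \<inter> f ` I = {}"
    and ind: "independent (C \<union> f ` I)" and sp: "span (C \<union> f ` I) = U"
    using B by (simp_all add: basis_extension_def)
  have I: "insert (f j) (C \<union> f ` (I - {j})) = C \<union> f ` I"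
    using j by blast
  have "inj_on f (I - {j})"
    using inj by (rule inj_on_subset) blast
  moreover have "insert v C \<inter> f ` (I - {j}) = {}"
    using disj v(2) span_base[of v "C \<union> f ` (I - {j})"] by blast
  moreover have "independent (insert v (C \<union> f ` (I - {j})))"
  proof (rule independent_insertI[OF v(2)])
    show "independent (C \<union> f ` (I - {j}))"
      using ind by (rule independent_mono) blast
  qed
  moreover have "span (insert v (C \<union> f ` (I - {j}))) = U"
  proof -
    have "v \<in> span (insert (f j) (C \<union> f ` (I - {j})))"
      using v(1) unfolding I sp .
    then have "span (insert v (C \<union> f ` (I - {j}))) = span (insert (f j) (C \<union> f ` (I - {j})))"
      using v(2) by (rule span_insert_swap)
    then show ?thesis
      unfolding I sp .
  qed
  ultimately show ?thesis
    unfolding basis_extension_def by simp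
qed

lemma basis_extension_remove:
  assumes "basis_extension scale C f I U" "j \<in> I"
  shows "basis_extension scale (insert (f j) C) f (I - {j}) U"
proof (rule basis_extension_exchange[OF assms])
  show "f j \<in> U"
    using assms span_base[of "f j" "C \<union> f ` I"] unfolding basis_extension_def by blast
  show "f j \<notin> span (C \<union> f ` (I - {j}))"
    using assms by (rule basis_extension_not_in_span)
qed

lemma basis_extension_symmetric_exchange_span:
  assumes B: "basis_extension scale C b IB U" and A: "basis_extension scale C a IA U"
    and "finite IA" and k: "k \<in> IB"
  shows "\<exists>j\<in>IA. a j \<notin> span (C \<union> b ` (IB - {k})) \<and> b k \<notin> span (C \<union> a ` (IA - {j}))"
proof (rule ccontr)
  assume contra: "\<not> ?thesis"
  \<comment> \<open>Then \<open>b k\<close> lies in the span of \<open>C \<union> a ` (IA - {j})\<close> for every \<open>j \<in> S\<close>, hence, by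
    independence, in the span of \<open>C \<union> a ` (IA - S)\<close>, which is contained in the span of
    \<open>C \<union> b ` (IB - {k})\<close>.\<close>
  define S where "S = {j \<in> IA. a j \<notin> span (C \<union> b ` (IB - {k}))}"
  define Y where "Y = C \<union> a ` IA"
  have "b k \<in> span (C \<union> b ` IB)"
    using k by (intro span_base) auto
  then have bk: "b k \<in> span Y"
    using A B unfolding Y_def basis_extension_def by simp
  have avoid: "\<forall>y\<in>a ` S. b k \<in> span (Y - {y})"
  proof
    fix y assume "y \<in> a ` S"
    then obtain j where j: "j \<in> S" "y = a j" by blast
    then have "j \<in> IA" "b k \<in> span (C \<union> a ` (IA - {j}))"
      using contra unfolding S_def by blast+
    moreover have "Y - {a j} = C \<union> a ` (IA - {j})" if "j \<in> IA"
      using A that unfolding Y_def basis_extension_def inj_on_def by blast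
    ultimately show "b k \<in> span (Y - {y})"
      using j(2) by simp
  qed
  have "independent Y"
    using A unfolding Y_def basis_extension_def by simp
  then have "b k \<in> span (Y - a ` S)"
    using \<open>finite IA\<close> bk avoid unfolding S_def by (intro independent_in_span_Diff) auto
  also have "\<dots> \<subseteq> span (C \<union> b ` (IB - {k}))"
  proof (rule span_minimal[OF _ subspace_span], rule subsetI)
    fix y assume "y \<in> Y - a ` S"
    then consider "y \<in> C" | j where "j \<in> IA" "j \<notin> S" "y = a j"
      unfolding Y_def by blast
    then show "y \<in> span (C \<union> b ` (IB - {k}))"
    proof cases
      case 1
      then show ?thesis by (simp add: span_base)
    next
      case 2
      then show ?thesis unfolding S_def by simp
    qed
  qed
  finally show False
    using basis_extension_not_in_span[OF B k] by contradiction
qed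

lemma basis_extension_symmetric_exchange:
  assumes B: "basis_extension scale C b IB U" and A: "basis_extension scale C a IA U"
    and "finite IA" and k: "k \<in> IB"
  obtains j where "j \<in> IA"
    and "basis_extension scale (insert (b k) C) b (IB - {k}) U"
    and "basis_extension scale (insert (b k) C) a (IA - {j}) U"
    and "basis_extension scale (insert (a j) C) b (IB - {k}) U"
    and "basis_extension scale (insert (a j) C) a (IA - {j}) U"
proof -
  obtain j where j: "j \<in> IA" "a j \<notin> span (C \<union> b ` (IB - {k}))" "b k \<notin> span (C \<union> a ` (IA - {j}))"
    using basis_extension_symmetric_exchange_span[OF B A \<open>finite IA\<close> k] by blast
  have "span (C \<union> b ` IB) = U" "span (C \<union> a ` IA) = U"
    using A B by (simp_all add: basis_extension_def)
  then have "b k \<in> U" "a j \<in> U"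
    using k j(1) span_base[of "b k" "C \<union> b ` IB"] span_base[of "a j" "C \<union> a ` IA"] by auto
  show thesis
  proof
    show "basis_extension scale (insert (b k) C) b (IB - {k}) U"
      using B k by (rule basis_extension_remove)
    show "basis_extension scale (insert (b k) C) a (IA - {j}) U"
      using A j(1) \<open>b k \<in> U\<close> j(3) by (rule basis_extension_exchange)
    show "basis_extension scale (insert (a j) C) b (IB - {k}) U"
      using B k \<open>a j \<in> U\<close> j(2) by (rule basis_extension_exchange)
    show "basis_extension scale (insert (a j) C) a (IA - {j}) U"
      using A j(1) by (rule basis_extension_remove)
  qed (rule j(1))
qed

lemma basis_extension_complementary_bij_0:
  assumes "finite IB" "finite IA" "card IA = card IB" and A: "basis_extension scale C a IA U"
  shows "bij_betw (\<lambda>_. IA) {I. I \<subseteq> IB \<and> card I = 0} {J. J \<subseteq> IA \<and> card J + 0 = card IB}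
    \<and> (\<forall>I. I \<subseteq> IB \<and> card I = 0 \<longrightarrow>
          independent (C \<union> b ` I \<union> a ` IA) \<and> span (C \<union> b ` I \<union> a ` IA) = U)"
proof -
  have D: "{I. I \<subseteq> IB \<and> card I = 0} = {{}}"
    using \<open>finite IB\<close> by (auto dest: finite_subset)
  have E: "{J. J \<subseteq> IA \<and> card J + 0 = card IB} = {IA}"
    using assms(2,3) by (auto dest: card_subset_eq)
  have "bij_betw (\<lambda>_. IA) {I. I \<subseteq> IB \<and> card I = 0} {J. J \<subseteq> IA \<and> card J + 0 = card IB}"
    unfolding D E by (simp add: bij_betw_def)
  moreover have "independent (C \<union> b ` I \<union> a ` IA) \<and> span (C \<union> b ` I \<union> a ` IA) = U"
    if "I \<subseteq> IB" "card I = 0" for I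
  proof -
    have "I = {}"
      using that D by blast
    then show ?thesis
      using A unfolding basis_extension_def by simp
  qed
  ultimately show ?thesis
    by blast
qed

lemma complementary_bij_insert:
  assumes F: "finite F" "k \<notin> F" and G: "finite G" "j \<notin> G"
    and \<phi>1: "bij_betw \<phi>1 {I. I \<subseteq> F \<and> card I = r} {J. J \<subseteq> G \<and> card J + r = m}"
    and B1: "\<forall>I. I \<subseteq> F \<and> card I = r \<longrightarrow>
      independent (insert (b k) C \<union> b ` I \<union> a ` \<phi>1 I) \<and> span (insert (b k) C \<union> b ` I \<union> a ` \<phi>1 I) = U"
    and \<phi>2: "bij_betw \<phi>2 {I. I \<subseteq> F \<and> card I = Suc r} {J. J \<subseteq> G \<and> card J + Suc r = m}"
    and B2: "\<forall>I. I \<subseteq> F \<and> card I = Suc r \<longrightarrow>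
      independent (insert (a j) C \<union> b ` I \<union> a ` \<phi>2 I) \<and> span (insert (a j) C \<union> b ` I \<union> a ` \<phi>2 I) = U"
  defines "\<phi> \<equiv> \<lambda>I. if k \<in> I then \<phi>1 (I - {k}) else insert j (\<phi>2 I)"
  shows "bij_betw \<phi> {I. I \<subseteq> insert k F \<and> card I = Suc r} {J. J \<subseteq> insert j G \<and> card J + Suc r = Suc m}
    \<and> (\<forall>I. I \<subseteq> insert k F \<and> card I = Suc r \<longrightarrow>
          independent (C \<union> b ` I \<union> a ` \<phi> I) \<and> span (C \<union> b ` I \<union> a ` \<phi> I) = U)"
proof -
  have "independent (C \<union> b ` I \<union> a ` \<phi> I) \<and> span (C \<union> b ` I \<union> a ` \<phi> I) = U"
    if "I \<subseteq> insert k F" "card I = Suc r" for I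
  proof (cases "k \<in> I")
    case True
    then have "C \<union> b ` I \<union> a ` \<phi> I = insert (b k) C \<union> b ` (I - {k}) \<union> a ` \<phi>1 (I - {k})"
      unfolding \<phi>_def by auto
    moreover have "I - {k} \<subseteq> F" "card (I - {k}) = r"
      using that True F(1) by (auto dest: finite_subset)
    ultimately show ?thesis
      using B1 by simp
  next
    case False
    then have "C \<union> b ` I \<union> a ` \<phi> I = insert (a j) C \<union> b ` I \<union> a ` \<phi>2 I"
      unfolding \<phi>_def by auto
    moreover have "I \<subseteq> F"
      using that False by auto
    ultimately show ?thesis
      using B2 that(2) by simp
  qed
  with bij_betw_subsets_insert_split[OF F G \<phi>1 \<phi>2] show ?thesis
    unfolding \<phi>_def by blast
qed

text \<open>Writing \<open>card J + i = card IB\<close> instead of \<open>card J = card IB - i\<close> makes the claim hold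
  (vacuously) for every \<open>i\<close>, so the induction needs no side condition on \<open>i\<close>.\<close>

lemma basis_extension_complementary_bij:
  assumes "finite IB" "finite IA" "card IA = card IB"
    and "basis_extension scale C b IB U" "basis_extension scale C a IA U"
  shows "\<exists>\<phi>. bij_betw \<phi> {I. I \<subseteq> IB \<and> card I = i} {J. J \<subseteq> IA \<and> card J + i = card IB}
    \<and> (\<forall>I. I \<subseteq> IB \<and> card I = i \<longrightarrow>
          independent (C \<union> b ` I \<union> a ` \<phi> I) \<and> span (C \<union> b ` I \<union> a ` \<phi> I) = U)"
  using assms
proof (induction IB arbitrary: C IA i rule: finite_induct)
  case empty
  show ?case
  proof (cases i)
    case 0
    then show ?thesis
      using basis_extension_complementary_bij_0[OF finite.emptyI empty.prems(1,2,4)] by blast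
  next
    case (Suc r)
    then have D: "{I. I \<subseteq> {} \<and> card I = i} = {}"
      and E: "{J. J \<subseteq> IA \<and> card J + i = card {}} = {}"
      by auto
    show ?thesis
      using Suc unfolding D E by (simp add: bij_betw_def)
  qed
next
  case (insert k F)
  show ?case
  proof (cases i)
    case 0
    then show ?thesis
      using basis_extension_complementary_bij_0[OF _ insert.prems(1,2,4)] insert.hyps(1) by blast
  next
    case (Suc r)
    have F: "insert k F - {k} = F"
      using insert.hyps(2) by simp
    obtain j where j: "j \<in> IA"
      and Bk: "basis_extension scale (insert (b k) C) b F U"
      and Ak: "basis_extension scale (insert (b k) C) a (IA - {j}) U"
      and Bj: "basis_extension scale (insert (a j) C) b F U"
      and Aj: "basis_extension scale (insert (a j) C) a (IA - {j}) U"
      using basis_extension_symmetric_exchange[OF insert.prems(3,4,1) insertI1] unfolding F .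
    let ?G = "IA - {j}"
    have G: "finite ?G" "card ?G = card F" "j \<notin> ?G" "insert j ?G = IA"
      using insert j by auto
    obtain \<phi>1
      where \<phi>1: "bij_betw \<phi>1 {I. I \<subseteq> F \<and> card I = r} {J. J \<subseteq> ?G \<and> card J + r = card F}"
        and B1: "\<forall>I. I \<subseteq> F \<and> card I = r \<longrightarrow>
          independent (insert (b k) C \<union> b ` I \<union> a ` \<phi>1 I)
          \<and> span (insert (b k) C \<union> b ` I \<union> a ` \<phi>1 I) = U"
      using insert.IH[OF G(1,2) Bk Ak] by blast
    obtain \<phi>2
      where \<phi>2: "bij_betw \<phi>2 {I. I \<subseteq> F \<and> card I = Suc r} {J. J \<subseteq> ?G \<and> card J + Suc r = card F}"
        and B2: "\<forall>I. I \<subseteq> F \<and> card I = Suc r \<longrightarrow>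
          independent (insert (a j) C \<union> b ` I \<union> a ` \<phi>2 I)
          \<and> span (insert (a j) C \<union> b ` I \<union> a ` \<phi>2 I) = U"
      using insert.IH[OF G(1,2) Bj Aj] by blast
    have "card (insert k F) = Suc (card F)"
      using insert.hyps by simp
    then show ?thesis
      unfolding Suc using complementary_bij_insert[OF insert.hyps G(1,3) \<phi>1 B1 \<phi>2 B2, unfolded G(4)]
      by (intro exI) simp
  qed
qed

end

theorem lemma2p2:
  fixes scale :: "'a::field \<Rightarrow> 'v::ab_group_add \<Rightarrow> 'v"
    and b a :: "nat \<Rightarrow> 'v"
    and n i :: nat
  assumes vs: "vector_space scale"
    and b_inj: "inj_on b {1..n}"
    and b_indep: "\<not> module.dependent scale (b ` {1..n})"
    and b_span: "module.span scale (b ` {1..n}) = UNIV"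
    and a_inj: "inj_on a {1..n}"
    and a_indep: "\<not> module.dependent scale (a ` {1..n})"
    and a_span: "module.span scale (a ` {1..n}) = UNIV"
    and i_ge: "1 \<le> i" and i_lt: "i < n"
  shows "\<exists>\<phi>. bij_betw \<phi> {I. I \<subseteq> {1..n} \<and> card I = i}
                        {J. J \<subseteq> {1..n} \<and> card J = n - i}
           \<and> (\<forall>I. I \<subseteq> {1..n} \<and> card I = i \<longrightarrow>
                 \<not> module.dependent scale (b ` I \<union> a ` \<phi> I)
               \<and> module.span scale (b ` I \<union> a ` \<phi> I) = UNIV)"
proof -
  interpret vector_space scale
    by (rule vs)
  have B: "basis_extension scale {} b {1..n} UNIV" and A: "basis_extension scale {} a {1..n} UNIV"
    using assms by (simp_all add: basis_extension_def)
  obtain \<phi>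
    where "bij_betw \<phi> {I. I \<subseteq> {1..n} \<and> card I = i} {J. J \<subseteq> {1..n} \<and> card J + i = card {1..n}}"
      and "\<forall>I. I \<subseteq> {1..n} \<and> card I = i \<longrightarrow>
        independent ({} \<union> b ` I \<union> a ` \<phi> I) \<and> span ({} \<union> b ` I \<union> a ` \<phi> I) = UNIV"
    using basis_extension_complementary_bij[OF finite_atLeastAtMost finite_atLeastAtMost refl B A]
    by blast
  moreover have "{J. J \<subseteq> {1..n} \<and> card J + i = card {1..n}} = {J. J \<subseteq> {1..n} \<and> card J = n - i}"
    using i_lt by auto
  ultimately show ?thesis
    by auto
qed

end
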